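(* Let $k,t\ge1$ be integers, let $\mathcal L$ be a finite language of relation and/or constant symbols whose maximal relation arity is $r\ge2$, and let $\mathcal M$ be a totally $k$-bounded $\mathcal L$-structure containing an infinite component. Then there are an integer $t'$ with $t\le t'\le tr$ and a substructure $\mathcal M'$ of $\mathcal M$ such that $\mathcal M'$ has infinitely many distinct components of size $t'$.
   Context: An $\mathcal L$-structure $\mathcal M$ is totally $k$-bounded if for every relation symbol $R(x_1,\dots,x_s)$ of $\mathcal L$ and every partition $[s]=I\cup J$ into nonempty sets, for every assignment of the variables $\bar x_I$ in $M$ there are fewer than $k$ assignments of $\bar x_J$ with $\mathcal M\models R(x_1,\dots,x_s)$. Paths and components: a path from $a$ to $b$ is a finite sequence of tuples $\bar a_1,\dots,\bar a_m$ from $M$, each $\bar a_i$ in the interpretation of some relation symbol, consecutive tuples sharing an element, with $a$ in $\bar a_1$ and $b$ in $\bar a_m$; $A\subseteq M$ is connected if any two distinct elements of $A$ are joined by a path using only elements of $A$; a component is a nonempty connected set closed under paths. Substructures contain the interpretations of all constants. *)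

theory Defs
  imports Main
begin

definition is_structure ::
  "'a set \<Rightarrow> 'r set \<Rightarrow> ('r \<Rightarrow> nat) \<Rightarrow> ('r \<Rightarrow> 'a list set) \<Rightarrow> 'c set \<Rightarrow> ('c \<Rightarrow> 'a) \<Rightarrow> bool" where
  "is_structure M Rs ar Rel Cs cst \<longleftrightarrow>
     (\<forall>R\<in>Rs. \<forall>xs\<in>Rel R. length xs = ar R \<and> set xs \<subseteq> M) \<and> cst ` Cs \<subseteq> M"

definition totally_bounded ::
  "nat \<Rightarrow> 'a set \<Rightarrow> 'r set \<Rightarrow> ('r \<Rightarrow> nat) \<Rightarrow> ('r \<Rightarrow> 'a list set) \<Rightarrow> bool" where
  "totally_bounded k M Rs ar Rel \<longleftrightarrow>
     (\<forall>R\<in>Rs. \<forall>I J. I \<union> J = {..<ar R} \<and> I \<inter> J = {} \<and> I \<noteq> {} \<and> J \<noteq> {} \<longrightarrow>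
        (\<forall>a::nat \<Rightarrow> 'a. (\<forall>i\<in>I. a i \<in> M) \<longrightarrow>
           finite {ys \<in> Rel R. \<forall>i\<in>I. ys ! i = a i} \<and>
           card {ys \<in> Rel R. \<forall>i\<in>I. ys ! i = a i} < k))"

definition tuples :: "'r set \<Rightarrow> ('r \<Rightarrow> 'a list set) \<Rightarrow> 'a list set" where
  "tuples Rs Rel = (\<Union>R\<in>Rs. Rel R)"

definition is_path ::
  "'r set \<Rightarrow> ('r \<Rightarrow> 'a list set) \<Rightarrow> 'a list list \<Rightarrow> 'a \<Rightarrow> 'a \<Rightarrow> bool" where
  "is_path Rs Rel ps a b \<longleftrightarrow>
     ps \<noteq> [] \<and> (\<forall>p\<in>set ps. p \<in> tuples Rs Rel) \<and>
     (\<forall>i. Suc i < length ps \<longrightarrow> set (ps ! i) \<inter> set (ps ! Suc i) \<noteq> {}) \<and>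
     a \<in> set (hd ps) \<and> b \<in> set (last ps)"

definition connected_set :: "'r set \<Rightarrow> ('r \<Rightarrow> 'a list set) \<Rightarrow> 'a set \<Rightarrow> bool" where
  "connected_set Rs Rel A \<longleftrightarrow>
     (\<forall>a\<in>A. \<forall>b\<in>A. a \<noteq> b \<longrightarrow>
        (\<exists>ps. is_path Rs Rel ps a b \<and> (\<forall>p\<in>set ps. set p \<subseteq> A)))"

definition component ::
  "'a set \<Rightarrow> 'r set \<Rightarrow> ('r \<Rightarrow> 'a list set) \<Rightarrow> 'a set \<Rightarrow> bool" where
  "component M Rs Rel C \<longleftrightarrow>
     C \<noteq> {} \<and> C \<subseteq> M \<and> connected_set Rs Rel C \<and>
     (\<forall>a\<in>C. \<forall>b ps. is_path Rs Rel ps a b \<longrightarrow> b \<in> C)"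

text \<open>Induced substructure on A: relations restricted to tuples from A.\<close>
definition restrict_rel :: "('r \<Rightarrow> 'a list set) \<Rightarrow> 'a set \<Rightarrow> 'r \<Rightarrow> 'a list set" where
  "restrict_rel Rel A R = {xs \<in> Rel R. set xs \<subseteq> A}"

end

theory Submission
  imports Defs
begin

text \<open>Total boundedness makes every element lie in only finitely many tuples, so balls of
  the Gaifman graph around finite sets are finite. Given a finite set \<open>F\<close>, pick a point \<open>c\<close>
  of the infinite component at distance more than \<open>t\<close> from \<open>F\<close> and grow a connected set
  around \<open>c\<close>, one overlapping tuple at a time, until it has at least \<open>t\<close> elements. Each tuple
  adds fewer than \<open>r\<close> new elements, so the final size lies in \<open>[t, t + r - 1]\<close>, and the set
  stays within distance \<open>t - 1\<close> of \<open>c\<close>, so no tuple links it to \<open>F\<close>. Iterating with \<open>F\<close> the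
  constants plus all earlier blocks yields infinitely many mutually unlinked blocks; each is a
  component of the substructure they induce together with the constants, and by pigeonhole
  infinitely many of them share a size \<open>t' \<le> t + r - 1 \<le> t r\<close>.\<close>

section \<open>Paths\<close>

lemma is_path_single:
  "p \<in> tuples Rs Rel \<Longrightarrow> a \<in> set p \<Longrightarrow> b \<in> set p \<Longrightarrow> is_path Rs Rel [p] a b"
  unfolding is_path_def by auto

lemma is_path_tl:
  assumes "is_path Rs Rel (p # ps) a b" "ps \<noteq> []" "x \<in> set (hd ps)"
  shows "is_path Rs Rel ps x b"
proof -
  have "set (ps ! i) \<inter> set (ps ! Suc i) \<noteq> {}" if "Suc i < length ps" for i
    using assms(1) that unfolding is_path_def by (metis Suc_less_eq length_Cons nth_Cons_Suc)
  with assms show ?thesis unfolding is_path_def by auto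
qed

lemma is_path_append:
  assumes "is_path Rs Rel ps a x" "is_path Rs Rel qs x b"
  shows "is_path Rs Rel (ps @ qs) a b"
proof -
  have ne: "ps \<noteq> []" "qs \<noteq> []" using assms by (auto simp: is_path_def)
  have "set ((ps @ qs) ! i) \<inter> set ((ps @ qs) ! Suc i) \<noteq> {}" if i: "Suc i < length (ps @ qs)" for i
  proof -
    consider "Suc i < length ps" | "Suc i = length ps" | "length ps \<le> i" by linarith
    then show ?thesis
    proof cases
      case 1
      then show ?thesis using assms(1) by (simp add: is_path_def nth_append)
    next
      case 2
      then have "i = length ps - 1" by simp
      with 2 ne have "(ps @ qs) ! i = last ps" "(ps @ qs) ! Suc i = hd qs"
        by (simp_all add: nth_append last_conv_nth hd_conv_nth)
      then show ?thesis using assms by (auto simp: is_path_def)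
    next
      case 3
      then obtain j where "i = length ps + j" by (auto simp: le_iff_add)
      then show ?thesis using assms(2) i by (simp add: is_path_def nth_append)
    qed
  qed
  with assms show ?thesis by (auto simp: is_path_def)
qed

lemma is_path_rev:
  assumes "is_path Rs Rel ps a b"
  shows "is_path Rs Rel (rev ps) b a"
proof -
  have "set (rev ps ! i) \<inter> set (rev ps ! Suc i) \<noteq> {}" if i: "Suc i < length ps" for i
  proof -
    let ?j = "length ps - Suc (Suc i)"
    have "set (ps ! ?j) \<inter> set (ps ! Suc ?j) \<noteq> {}"
      using assms i by (simp add: is_path_def)
    moreover have "rev ps ! i = ps ! Suc ?j" "rev ps ! Suc i = ps ! ?j"
      using i by (simp_all add: rev_nth Suc_diff_Suc)
    ultimately show ?thesis by auto
  qed
  with assms show ?thesis by (auto simp: is_path_def hd_rev last_rev)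
qed

lemma is_path_exit_tuple:
  "is_path Rs Rel ps a b \<Longrightarrow> a \<in> S \<Longrightarrow> b \<notin> S \<Longrightarrow>
    \<exists>p\<in>set ps. set p \<inter> S \<noteq> {} \<and> \<not> set p \<subseteq> S"
proof (induction ps arbitrary: a)
  case Nil
  then show ?case by (simp add: is_path_def)
next
  case (Cons p ps)
  show ?case
  proof (cases "set p \<subseteq> S")
    case True
    then have "ps \<noteq> []" using Cons.prems by (auto simp: is_path_def)
    then have "set p \<inter> set (hd ps) \<noteq> {}"
      using Cons.prems(1) unfolding is_path_def by (metis hd_conv_nth length_Cons
          length_greater_0_conv nth_Cons_0 nth_Cons_Suc Suc_less_eq)
    then obtain x where "x \<in> set p" "x \<in> set (hd ps)" by auto
    with Cons is_path_tl[OF Cons.prems(1) \<open>ps \<noteq> []\<close>] True show ?thesis by fastforce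
  next
    case False
    with Cons.prems show ?thesis by (auto simp: is_path_def)
  qed
qed

lemma is_path_closed:
  assumes "is_path Rs Rel ps a b" "a \<in> S"
    and "\<forall>p\<in>tuples Rs Rel. set p \<inter> S \<noteq> {} \<longrightarrow> set p \<subseteq> S"
  shows "b \<in> S"
  using is_path_exit_tuple[of Rs Rel ps a b S] assms by (fastforce simp: is_path_def)

lemma tuples_restrict_rel: "tuples Rs (restrict_rel Rel A) = {p \<in> tuples Rs Rel. set p \<subseteq> A}"
  by (auto simp: tuples_def restrict_rel_def)

lemma is_path_restrict_rel:
  "is_path Rs Rel ps a b \<Longrightarrow> \<forall>p\<in>set ps. set p \<subseteq> A \<Longrightarrow> is_path Rs (restrict_rel Rel A) ps a b"
  by (simp add: is_path_def tuples_restrict_rel)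

section \<open>Connected sets and components\<close>

lemma connected_set_if_paths_from:
  assumes "\<And>a. a \<in> S \<Longrightarrow> \<exists>ps. is_path Rs Rel ps z a \<and> (\<forall>p\<in>set ps. set p \<subseteq> S)"
  shows "connected_set Rs Rel S"
  unfolding connected_set_def
proof (intro ballI impI)
  fix a b assume "a \<in> S" "b \<in> S"
  then obtain ps qs where "is_path Rs Rel ps z a" "\<forall>p\<in>set ps. set p \<subseteq> S"
    and "is_path Rs Rel qs z b" "\<forall>p\<in>set qs. set p \<subseteq> S"
    using assms by meson
  then show "\<exists>ps. is_path Rs Rel ps a b \<and> (\<forall>p\<in>set ps. set p \<subseteq> S)"
    by (intro exI[of _ "rev ps @ qs"]) (auto intro: is_path_append is_path_rev)
qed

lemma connected_set_Un_tuple: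
  assumes "connected_set Rs Rel S" "p \<in> tuples Rs Rel" "z \<in> set p" "z \<in> S"
  shows "connected_set Rs Rel (S \<union> set p)"
proof (rule connected_set_if_paths_from)
  fix a assume a: "a \<in> S \<union> set p"
  show "\<exists>ps. is_path Rs Rel ps z a \<and> (\<forall>q\<in>set ps. set q \<subseteq> S \<union> set p)"
  proof (cases "a \<in> S \<and> a \<noteq> z")
    case True
    then have "a \<in> S" "z \<noteq> a" by auto
    with assms(1,4) obtain ps where "is_path Rs Rel ps z a" "\<forall>q\<in>set ps. set q \<subseteq> S"
      unfolding connected_set_def by blast
    then show ?thesis by blast
  next
    case False
    with a assms(2,3) have "is_path Rs Rel [p] z a" by (auto intro: is_path_single)
    then show ?thesis by auto
  qed
qed

lemma connected_set_exit_tuple: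
  assumes "connected_set Rs Rel C" "S \<subseteq> C" "a \<in> S" "b \<in> C" "b \<notin> S"
  shows "\<exists>p\<in>tuples Rs Rel. set p \<subseteq> C \<and> set p \<inter> S \<noteq> {} \<and> \<not> set p \<subseteq> S"
proof -
  have "a \<in> C" "a \<noteq> b" using assms(2,3,5) by auto
  then obtain ps where ps: "is_path Rs Rel ps a b" "\<forall>p\<in>set ps. set p \<subseteq> C"
    using assms(1,4) unfolding connected_set_def by blast
  obtain p where p: "p \<in> set ps" "set p \<inter> S \<noteq> {}" "\<not> set p \<subseteq> S"
    using is_path_exit_tuple[OF ps(1) assms(3,5)] by blast
  moreover have "p \<in> tuples Rs Rel" using ps(1) p(1) by (simp add: is_path_def)
  ultimately show ?thesis using ps(2) by blast
qed

lemma component_restrict_rel_if_closed: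
  assumes "S \<noteq> {}" "S \<subseteq> A" "connected_set Rs Rel S"
    and "\<forall>p\<in>tuples Rs Rel. set p \<subseteq> A \<longrightarrow> set p \<inter> S \<noteq> {} \<longrightarrow> set p \<subseteq> S"
  shows "component A Rs (restrict_rel Rel A) S"
  unfolding component_def
proof (intro conjI ballI allI impI)
  show "connected_set Rs (restrict_rel Rel A) S"
    unfolding connected_set_def
  proof (intro ballI impI)
    fix a b assume "a \<in> S" "b \<in> S" "a \<noteq> b"
    with assms(3) obtain ps where "is_path Rs Rel ps a b" "\<forall>p\<in>set ps. set p \<subseteq> S"
      unfolding connected_set_def by blast
    moreover from this(2) assms(2) have "\<forall>p\<in>set ps. set p \<subseteq> A" by blast
    ultimately show "\<exists>ps. is_path Rs (restrict_rel Rel A) ps a b \<and> (\<forall>p\<in>set ps. set p \<subseteq> S)"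
      using is_path_restrict_rel[of Rs Rel ps a b A] by blast
  qed
  show "b \<in> S" if "a \<in> S" "is_path Rs (restrict_rel Rel A) ps a b" for a b ps
    using is_path_closed[OF that(2,1)] assms(4) by (simp add: tuples_restrict_rel)
qed (use assms in auto)

section \<open>The Gaifman graph\<close>

text \<open>Reflexive, so that the balls \<open>(gaifman Rs Rel ^^ n) `` X\<close> grow with \<open>n\<close> and
  \<open>gaifman Rs Rel `` F \<inter> S = {}\<close> also forces \<open>F \<inter> S = {}\<close>.\<close>

definition gaifman :: "'r set \<Rightarrow> ('r \<Rightarrow> 'a list set) \<Rightarrow> 'a rel" where
  "gaifman Rs Rel = Id \<union> {(x, y). \<exists>p\<in>tuples Rs Rel. x \<in> set p \<and> y \<in> set p}"

lemma gaifman_refl [simp]: "(x, x) \<in> gaifman Rs Rel"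
  by (simp add: gaifman_def)

lemma gaifman_tuple: "p \<in> tuples Rs Rel \<Longrightarrow> x \<in> set p \<Longrightarrow> y \<in> set p \<Longrightarrow> (x, y) \<in> gaifman Rs Rel"
  by (auto simp: gaifman_def)

lemma finite_gaifman_relpow_Image:
  assumes "\<And>x. finite {p \<in> tuples Rs Rel. x \<in> set p}" "finite X"
  shows "finite ((gaifman Rs Rel ^^ n) `` X)"
proof (induction n)
  case 0
  then show ?case using assms(2) by simp
next
  case (Suc n)
  let ?Y = "(gaifman Rs Rel ^^ n) `` X"
  have "gaifman Rs Rel `` ?Y \<subseteq> ?Y \<union> (\<Union>x\<in>?Y. \<Union>p\<in>{p \<in> tuples Rs Rel. x \<in> set p}. set p)"
    by (auto simp: gaifman_def)
  moreover have "finite (?Y \<union> (\<Union>x\<in>?Y. \<Union>p\<in>{p \<in> tuples Rs Rel. x \<in> set p}. set p))"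
    using Suc assms(1) by simp
  ultimately show ?case by (simp add: relcomp_Image finite_subset)
qed

lemma connected_subset_in_gaifman_ball:
  assumes C: "connected_set Rs Rel C" "infinite C" "c \<in> C"
    and len: "\<And>p. p \<in> tuples Rs Rel \<Longrightarrow> length p \<le> r" and "r \<ge> 1"
  shows "\<exists>S\<subseteq>C. c \<in> S \<and> connected_set Rs Rel S \<and> (\<forall>s\<in>S. (s, c) \<in> gaifman Rs Rel ^^ n) \<and>
           Suc n \<le> card S \<and> card S \<le> n + r"
proof (induction n)
  case 0
  have "connected_set Rs Rel {c}" by (simp add: connected_set_def)
  with C(3) \<open>r \<ge> 1\<close> show ?case by (intro exI[of _ "{c}"]) auto
next
  case (Suc n)
  then obtain S where S: "S \<subseteq> C" "c \<in> S" "connected_set Rs Rel S"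
    "\<forall>s\<in>S. (s, c) \<in> gaifman Rs Rel ^^ n" "Suc n \<le> card S" "card S \<le> n + r"
    by blast
  have fin: "finite S" using S(5) card_ge_0_finite by force
  show ?case
  proof (cases "Suc (Suc n) \<le> card S")
    case True
    have "(s, c) \<in> gaifman Rs Rel ^^ Suc n" if "s \<in> S" for s
      using S(4) that by (intro relpow_Suc_I2[OF gaifman_refl]) blast
    with S True show ?thesis by (intro exI[of _ S]) auto
  next
    case False
    obtain b where "b \<in> C" "b \<notin> S" using fin C(2) by (metis finite_subset subsetI)
    with connected_set_exit_tuple[OF C(1) S(1,2)] obtain p where
      p: "p \<in> tuples Rs Rel" "set p \<subseteq> C" "set p \<inter> S \<noteq> {}" "\<not> set p \<subseteq> S"
      by blast
    then obtain z where z: "z \<in> set p" "z \<in> S" by blast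
    let ?S' = "S \<union> set p"
    have "card (set p - S) < card (set p)" using z by (intro psubset_card_mono) auto
    also have "\<dots> \<le> r" using card_length len[OF p(1)] by (rule le_trans)
    finally have "card ?S' \<le> card S + (r - 1)"
      using card_Un_le[of S "set p - S"] by simp
    moreover have "card S < card ?S'" using fin p(4) by (intro psubset_card_mono) auto
    moreover have "(y, c) \<in> gaifman Rs Rel ^^ Suc n" if "y \<in> ?S'" for y
    proof -
      have "(y, s) \<in> gaifman Rs Rel" "(s, c) \<in> gaifman Rs Rel ^^ n"
        if "s \<in> S" "y = s \<or> y \<in> set p \<and> s = z" for s
        using that S(4) gaifman_tuple[OF p(1) _ z(1)] by auto
      with \<open>y \<in> ?S'\<close> z(2) show ?thesis by (blast intro: relpow_Suc_I2)
    qed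
    ultimately show ?thesis
      using S p(2) False connected_set_Un_tuple[OF S(3) p(1) z] by (intro exI[of _ ?S']) auto
  qed
qed

lemma connected_subset_far_from:
  assumes C: "connected_set Rs Rel C" "infinite C"
    and len: "\<And>p. p \<in> tuples Rs Rel \<Longrightarrow> length p \<le> r" and "r \<ge> 1" and "t \<ge> 1"
    and loc: "\<And>x. finite {p \<in> tuples Rs Rel. x \<in> set p}" and "finite F"
  shows "\<exists>S\<subseteq>C. finite S \<and> connected_set Rs Rel S \<and> t \<le> card S \<and> card S \<le> t + r - 1 \<and>
           gaifman Rs Rel `` F \<inter> S = {}"
proof -
  have "finite ((gaifman Rs Rel ^^ t) `` F)"
    using finite_gaifman_relpow_Image[OF loc \<open>finite F\<close>] .
  then obtain c where c: "c \<in> C" "c \<notin> (gaifman Rs Rel ^^ t) `` F"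
    using C(2) finite_subset by (metis subsetI)
  obtain S where S: "S \<subseteq> C" "connected_set Rs Rel S" "\<forall>s\<in>S. (s, c) \<in> gaifman Rs Rel ^^ (t - 1)"
    "t \<le> card S" "card S \<le> t + r - 1"
    using connected_subset_in_gaifman_ball[OF C c(1) len \<open>r \<ge> 1\<close>, of "t - 1"] \<open>t \<ge> 1\<close>
    by auto
  \<comment> \<open>an element of \<open>S\<close> linked to \<open>F\<close> would put \<open>c\<close> within distance \<open>t\<close> of \<open>F\<close>\<close>
  have "gaifman Rs Rel `` F \<inter> S = {}"
  proof (rule ccontr)
    assume "gaifman Rs Rel `` F \<inter> S \<noteq> {}"
    then obtain f s where "f \<in> F" "(f, s) \<in> gaifman Rs Rel" "s \<in> S" by blast
    with S(3) have "(f, c) \<in> gaifman Rs Rel ^^ Suc (t - 1)" by (blast intro: relpow_Suc_I2)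
    with c(2) \<open>f \<in> F\<close> \<open>t \<ge> 1\<close> show False by auto
  qed
  moreover have "finite S" using S(4) \<open>t \<ge> 1\<close> card_ge_0_finite by force
  ultimately show ?thesis using S by blast
qed

section \<open>Total boundedness and local finiteness\<close>

lemma totally_bounded_finite_tuples_at:
  assumes "totally_bounded k M Rs ar Rel" "R \<in> Rs" "i < ar R" "2 \<le> ar R" "x \<in> M"
  shows "finite {p \<in> Rel R. p ! i = x}"
proof -
  have "(if i = 0 then 1 else 0) \<in> {..<ar R} - {i}" using assms(3,4) by auto
  then have "{..<ar R} - {i} \<noteq> {}" by blast
  then show ?thesis
    using assms(1)[unfolded totally_bounded_def, rule_format, OF assms(2),
        of "{i}" "{..<ar R} - {i}" "\<lambda>_. x"] assms(3,5)
    by auto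
qed

lemma totally_bounded_locally_finite:
  assumes "is_structure M Rs ar Rel Cs cst" "totally_bounded k M Rs ar Rel" "finite Rs"
  shows "finite {p \<in> tuples Rs Rel. x \<in> set p}"
proof -
  have len: "length p = ar R" if "R \<in> Rs" "p \<in> Rel R" for R p
    using assms(1) that unfolding is_structure_def by blast
  have sub: "{p \<in> tuples Rs Rel. x \<in> set p} \<subseteq> (\<Union>R\<in>Rs. \<Union>i<ar R. {p \<in> Rel R. p ! i = x \<and> x \<in> M})"
    using assms(1) len unfolding tuples_def is_structure_def
    by (fastforce simp: in_set_conv_nth)
  have piece: "finite {p \<in> Rel R. p ! i = x \<and> x \<in> M}" if "R \<in> Rs" "i < ar R" for R i
  proof (cases "x \<in> M \<and> 2 \<le> ar R")
    case True
    with totally_bounded_finite_tuples_at[OF assms(2) that] show ?thesis by simp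
  next
    case False
    \<comment> \<open>either \<open>x \<notin> M\<close> and the set is empty, or \<open>R\<close> is unary\<close>
    have "{p \<in> Rel R. p ! i = x \<and> x \<in> M} \<subseteq> {[x]}"
    proof
      fix p assume p: "p \<in> {p \<in> Rel R. p ! i = x \<and> x \<in> M}"
      with False that have "length p = 1" "i = 0" using len[OF that(1)] by auto
      with p show "p \<in> {[x]}" by (cases p) auto
    qed
    then show ?thesis by (rule finite_subset) simp
  qed
  have "finite (\<Union>R\<in>Rs. \<Union>i<ar R. {p \<in> Rel R. p ! i = x \<and> x \<in> M})"
    using assms(3) piece by simp
  then show ?thesis using sub by (rule finite_subset[rotated])
qed

lemma is_structure_tuple_length:
  assumes "is_structure M Rs ar Rel Cs cst" "finite Rs" "p \<in> tuples Rs Rel"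
  shows "length p \<le> Max (ar ` Rs)"
proof -
  obtain R where "R \<in> Rs" "p \<in> Rel R" using assms(3) unfolding tuples_def by blast
  with assms(1,2) show ?thesis unfolding is_structure_def by (metis Max_ge finite_imageI imageI)
qed

section \<open>Infinitely many isolated blocks\<close>

lemma greedy_sequence:
  assumes "\<And>F. finite F \<Longrightarrow> \<exists>S. finite S \<and> P F S" "finite F0"
  shows "\<exists>S :: nat \<Rightarrow> 'a set. \<forall>j. P (F0 \<union> (\<Union>i<j. S i)) (S j)"
proof -
  define next_set where "next_set F = (SOME S. finite S \<and> P F S)" for F
  have next_set: "finite (next_set F) \<and> P F (next_set F)" if "finite F" for F
    unfolding next_set_def using someI_ex[OF assms(1)[OF that]] .
  define U where "U = rec_nat F0 (\<lambda>_ X. X \<union> next_set X)"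
  have U: "U j = F0 \<union> (\<Union>i<j. next_set (U i)) \<and> finite (U j)" for j
  proof (induction j)
    case 0
    then show ?case using assms(2) by (simp add: U_def)
  next
    case (Suc j)
    then have "finite (next_set (U j))" using next_set by blast
    moreover have "U (Suc j) = U j \<union> next_set (U j)" by (simp add: U_def)
    ultimately show ?case using Suc by (auto simp: lessThan_Suc)
  qed
  then have "P (F0 \<union> (\<Union>i<j. next_set (U i))) (next_set (U j))" for j
    using next_set[of "U j"] by metis
  then show ?thesis by blast
qed

lemma separated_sequence_components:
  fixes S :: "nat \<Rightarrow> 'a set"
  assumes conn: "\<And>j. connected_set Rs Rel (S j)" and ne: "\<And>j. S j \<noteq> {}"
    and sep: "\<And>j. gaifman Rs Rel `` (K \<union> (\<Union>i<j. S i)) \<inter> S j = {}"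
  defines "A \<equiv> K \<union> (\<Union>j. S j)"
  shows "inj S" and "component A Rs (restrict_rel Rel A) (S j)"
proof -
  have far: "(x, y) \<notin> gaifman Rs Rel" if "x \<in> K \<or> (\<exists>i<j. x \<in> S i)" "y \<in> S j" for x y j
    using sep[of j] that by blast
  show "inj S"
  proof (rule injI, rule ccontr)
    fix i j assume "S i = S j" "i \<noteq> j"
    moreover obtain x where "x \<in> S i" using ne by blast
    ultimately show False using far[of x _ x] gaifman_refl by (metis linorder_neqE_nat)
  qed
  have "set p \<subseteq> S j"
    if p: "p \<in> tuples Rs Rel" "set p \<subseteq> A" and x: "x \<in> set p" "x \<in> S j" for p x
  proof
    fix y assume y: "y \<in> set p"
    then have xy: "(x, y) \<in> gaifman Rs Rel" "(y, x) \<in> gaifman Rs Rel"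
      using gaifman_tuple[OF p(1)] x(1) by auto
    from y p(2) consider "y \<in> K" | i where "y \<in> S i" unfolding A_def by blast
    then show "y \<in> S j"
    proof cases
      case 1
      with far xy(2) x(2) show ?thesis by blast
    next
      case (2 i)
      with far xy x(2) show ?thesis by (metis linorder_neqE_nat)
    qed
  qed
  then show "component A Rs (restrict_rel Rel A) (S j)"
    using ne conn by (intro component_restrict_rel_if_closed) (auto simp: A_def)
qed

lemma infinitely_many_of_same_card:
  fixes S :: "nat \<Rightarrow> 'a set"
  assumes "inj S" "\<And>j. P (S j)" "\<And>j. card (S j) \<in> T" "finite T"
  shows "\<exists>n\<in>T. infinite {X. P X \<and> card X = n}"
proof -
  have "finite ((card \<circ> S) ` UNIV)"
    using assms(3,4) by (metis comp_apply finite_subset image_subset_iff)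
  then obtain j0 where "infinite {j. card (S j) = card (S j0)}"
    using pigeonhole_infinite[OF infinite_UNIV_nat] by auto
  then have "infinite (S ` {j. card (S j) = card (S j0)})"
    using finite_imageD inj_on_subset[OF assms(1)] by blast
  moreover have "S ` {j. card (S j) = card (S j0)} \<subseteq> {X. P X \<and> card X = card (S j0)}"
    using assms(2) by auto
  ultimately show ?thesis using assms(3) by (meson infinite_super)
qed

theorem mainTheorem10:
  fixes M :: "'a set" and Rs :: "'r set" and ar :: "'r \<Rightarrow> nat"
    and Rel :: "'r \<Rightarrow> 'a list set" and Cs :: "'c set" and cst :: "'c \<Rightarrow> 'a"
    and k t r :: nat
  assumes "k \<ge> 1" and "t \<ge> 1"
    and "finite Rs" and "finite Cs" and "Rs \<noteq> {}"
    and "r = Max (ar ` Rs)" and "r \<ge> 2"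
    and "is_structure M Rs ar Rel Cs cst"
    and "totally_bounded k M Rs ar Rel"
    and "\<exists>C. component M Rs Rel C \<and> infinite C"
  shows "\<exists>t' A. t \<le> t' \<and> t' \<le> t * r \<and> A \<subseteq> M \<and> cst ` Cs \<subseteq> A \<and>
           infinite {C. component A Rs (restrict_rel Rel A) C \<and> card C = t'}"
proof -
  obtain C where C: "connected_set Rs Rel C" "infinite C" "C \<subseteq> M"
    using assms(10) unfolding component_def by blast
  have len: "\<And>p. p \<in> tuples Rs Rel \<Longrightarrow> length p \<le> r"
    using is_structure_tuple_length[OF assms(8,3)] assms(6) by blast
  have "r \<ge> 1" using assms(7) by simp
  define block where "block F S \<longleftrightarrow> S \<subseteq> C \<and> connected_set Rs Rel S \<and>
    t \<le> card S \<and> card S \<le> t + r - 1 \<and> gaifman Rs Rel `` F \<inter> S = {}" for F S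
  have block_exists: "\<exists>S. finite S \<and> block F S" if "finite F" for F
    using connected_subset_far_from[OF C(1,2) len \<open>r \<ge> 1\<close> assms(2)
        totally_bounded_locally_finite[OF assms(8,9,3)] that]
    unfolding block_def by blast
  obtain S :: "nat \<Rightarrow> 'a set" where S: "\<And>j. block (cst ` Cs \<union> (\<Union>i<j. S i)) (S j)"
    using greedy_sequence[of block "cst ` Cs"] block_exists assms(4) by blast
  have S_sub: "S j \<subseteq> M" for j using S[of j] C(3) unfolding block_def by blast
  define A where "A = cst ` Cs \<union> (\<Union>j. S j)"
  have "S j \<noteq> {}" for j using S[of j] assms(2) by (auto simp: block_def)
  then have "inj S" and comps: "component A Rs (restrict_rel Rel A) (S j)" for j
    using separated_sequence_components[of Rs Rel S "cst ` Cs"] S unfolding block_def A_def by auto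
  then obtain t' where "t' \<in> {t..t + r - 1}" "infinite {X. component A Rs (restrict_rel Rel A) X \<and> card X = t'}"
    using infinitely_many_of_same_card[of S "component A Rs (restrict_rel Rel A)" "{t..t + r - 1}"]
      \<open>inj S\<close> comps S unfolding block_def by auto
  moreover have "t + r - 1 \<le> t * r" using assms(2,7) by (cases t; cases r) simp_all
  moreover have "A \<subseteq> M" "cst ` Cs \<subseteq> A"
    using assms(8) S_sub unfolding A_def is_structure_def by auto
  ultimately show ?thesis by (intro exI[of _ t'] exI[of _ A]) auto
qed

end
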